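(* Consider a stochastic $K$-armed bandit whose rewards lie in $[-R_{\max},R_{\max}]$, with mean reward vector $\mathbf r$, and run LB-SGB (defined in the context) with barrier parameter $\eta>0$ and learning rate $\alpha\in\Big(0,\frac{1}{6(\sqrt2R_{\max}+\frac{2}{\eta}K)}\Big)$. Then for all $t\ge1$, $$\Big|\Phi_\eta(\boldsymbol\theta_{t+1})-\Phi_\eta(\boldsymbol\theta_t)-\langle\nabla\Phi_\eta(\boldsymbol\theta_t),\boldsymbol\theta_{t+1}-\boldsymbol\theta_t\rangle\Big|\le\Big(\frac{3\|\nabla\Phi_\eta(\boldsymbol\theta_t)\|_2}{2-6\alpha(\sqrt2R_{\max}+\frac2\eta K)}+\frac{15K}{\eta}\Big)\|\boldsymbol\theta_{t+1}-\boldsymbol\theta_t\|_2^2.$$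
   Context: Softmax policy $\pi_{\boldsymbol\theta}(a)=e^{\theta(a)}/\sum_be^{\theta(b)}$; $\Phi_\eta(\boldsymbol\theta)=\pi_{\boldsymbol\theta}^\top\mathbf r+\frac1\eta\sum_a\log\pi_{\boldsymbol\theta}(a)$. LB-SGB: start from $\boldsymbol\theta=\mathbf 0$; at round $t$ sample $a_t\sim\pi_{\boldsymbol\theta_t}$, observe $R_t(a_t)$, set $\hat r_t(a)=\mathbb I\{a_t=a\}R_t(a_t)/\pi_{\boldsymbol\theta_t}(a)$ and update $\boldsymbol\theta_{t+1}=\boldsymbol\theta_t+\alpha\big[(\mathrm{diag}(\pi_{\boldsymbol\theta_t})-\pi_{\boldsymbol\theta_t}\pi_{\boldsymbol\theta_t}^\top)\hat{\mathbf r}_t+\frac1\eta(\mathbf 1-K\pi_{\boldsymbol\theta_t})\big]$. *)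

theory Defs
  imports "HOL-Analysis.Analysis"
begin

text \<open>Arms are indexed by a finite type 'n, so K = CARD('n); parameter vectors are real^'n.\<close>

definition softmax :: "real^'n::finite \<Rightarrow> real^'n" where
  "softmax \<theta> = (\<chi> a. exp (\<theta> $ a) / (\<Sum>b\<in>UNIV. exp (\<theta> $ b)))"

definition Phi :: "real \<Rightarrow> real^'n::finite \<Rightarrow> real^'n \<Rightarrow> real" where
  "Phi \<eta> r \<theta> = softmax \<theta> \<bullet> r + (1/\<eta>) * (\<Sum>a\<in>UNIV. ln (softmax \<theta> $ a))"

definition rhat :: "real^'n::finite \<Rightarrow> 'n \<Rightarrow> real \<Rightarrow> real^'n" where
  "rhat \<theta> act Rt = (\<chi> a. (if act = a then Rt else 0) / softmax \<theta> $ a)"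

definition lbsgb_step :: "real \<Rightarrow> real \<Rightarrow> real^'n::finite \<Rightarrow> 'n \<Rightarrow> real \<Rightarrow> real^'n" where
  "lbsgb_step \<alpha> \<eta> \<theta> act Rt =
     (let p = softmax \<theta>; g = rhat \<theta> act Rt in
      \<theta> + \<alpha> *\<^sub>R ((\<chi> a. p $ a * g $ a - p $ a * (p \<bullet> g))
                  + (1/\<eta>) *\<^sub>R (\<chi> a. 1 - real CARD('n) * p $ a)))"

text \<open>Iterates: lbsgb .. 0 is the paper's theta_1 = 0, lbsgb .. n is theta_(n+1);
  acts n / rews n are the paper's a_(n+1) and R_(n+1)(a_(n+1)).\<close>
primrec lbsgb :: "real \<Rightarrow> real \<Rightarrow> (nat \<Rightarrow> 'n::finite) \<Rightarrow> (nat \<Rightarrow> real) \<Rightarrow> nat \<Rightarrow> real^'n" where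
  "lbsgb \<alpha> \<eta> acts rews 0 = 0"
| "lbsgb \<alpha> \<eta> acts rews (Suc n) = lbsgb_step \<alpha> \<eta> (lbsgb \<alpha> \<eta> acts rews n) (acts n) (rews n)"

end

theory Submission
  imports Defs
begin

text \<open>Let d = theta_(t+1) - theta_t and restrict Phi_eta to the segment theta_t + s d, 0 <= s <= 1.
  By Taylor's theorem the left-hand side is half the second derivative at an intermediate point,
  and that second derivative is E_pi[(r - E_pi r)(d - E_pi d)^2] - (K/eta) Var_pi(d), so it is at most
  (3 |V| + K/eta) |d|^2, where V = (diag pi - pi pi^T) r is the reward part of the gradient.
  Along the segment |V|^2 has logarithmic derivative at most 6 |d|, so by Gronwall's inequality |V|
  grows at most by the factor exp (3 |d|) <= 1 / (1 - 3 |d|); at theta_t the barrier part of the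
  gradient has norm at most K/eta, whence |V| <= |grad Phi_eta| + K/eta. Finally each LB-SGB step has
  norm at most alpha (sqrt 2 R_max + K/eta), and the condition on alpha makes 1 - 3 |d| at least
  (2 - 6 alpha (sqrt 2 R_max + 2K/eta)) / 2 > 1/2.\<close>

definition softmax_mean :: "real^'n::finite \<Rightarrow> ('n \<Rightarrow> real) \<Rightarrow> real" where
  "softmax_mean \<theta> f = (\<Sum>a\<in>UNIV. softmax \<theta> $ a * f a)"

definition softmax_cov :: "real^'n::finite \<Rightarrow> ('n \<Rightarrow> real) \<Rightarrow> ('n \<Rightarrow> real) \<Rightarrow> real" where
  "softmax_cov \<theta> f h = softmax_mean \<theta> (\<lambda>a. f a * h a) - softmax_mean \<theta> f * softmax_mean \<theta> h"

definition log_sum_exp :: "real^'n::finite \<Rightarrow> real" where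
  "log_sum_exp \<theta> = ln (\<Sum>b\<in>UNIV. exp (\<theta> $ b))"

lemma sum_exp_pos: "(\<Sum>b\<in>UNIV. exp (\<theta> $ b)) > (0::real)"
  by (rule sum_pos) auto

lemma softmax_pos: "softmax \<theta> $ a > 0"
  using sum_exp_pos[of \<theta>] by (simp add: softmax_def)

lemma sum_softmax: "(\<Sum>a\<in>UNIV. softmax \<theta> $ a) = 1"
  using sum_exp_pos[of \<theta>] by (simp add: softmax_def flip: sum_divide_distrib)

lemma softmax_le_1: "softmax \<theta> $ a \<le> 1"
proof -
  have "softmax \<theta> $ a \<le> (\<Sum>b\<in>UNIV. softmax \<theta> $ b)"
    by (rule member_le_sum) (auto simp: less_imp_le softmax_pos)
  then show ?thesis by (simp add: sum_softmax)
qed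

lemma sum_softmax_power2_le: "(\<Sum>a\<in>UNIV. (softmax \<theta> $ a)\<^sup>2) \<le> 1"
proof -
  have "(\<Sum>a\<in>UNIV. (softmax \<theta> $ a)\<^sup>2) \<le> (\<Sum>a\<in>UNIV. softmax \<theta> $ a)"
    by (intro sum_mono) (simp add: power2_eq_square mult_left_le softmax_le_1 less_imp_le[OF softmax_pos])
  then show ?thesis by (simp add: sum_softmax)
qed

lemma ln_softmax: "ln (softmax \<theta> $ a) = \<theta> $ a - log_sum_exp \<theta>"
  using sum_exp_pos[of \<theta>] by (simp add: softmax_def log_sum_exp_def ln_div)

lemma Phi_eq_log_sum_exp:
  fixes \<theta> :: "real^'n::finite"
  shows "Phi \<eta> r \<theta> = softmax_mean \<theta> (($) r)
     + (1/\<eta>) * ((\<Sum>a\<in>UNIV. \<theta> $ a) - real CARD('n) * log_sum_exp \<theta>)"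
  by (simp add: Phi_def softmax_mean_def inner_vec_def ln_softmax sum_subtractf mult.commute)

lemma has_field_derivative_log_sum_exp_line [derivative_intros]:
  "((\<lambda>s. log_sum_exp (\<theta> + s *\<^sub>R d)) has_field_derivative softmax_mean (\<theta> + s *\<^sub>R d) (($) d))
     (at s within S)"
proof -
  have "((\<lambda>s. ln (\<Sum>b\<in>UNIV. exp (\<theta> $ b + s * d $ b))) has_field_derivative
      (\<Sum>b\<in>UNIV. d $ b * exp (\<theta> $ b + s * d $ b)) / (\<Sum>b\<in>UNIV. exp (\<theta> $ b + s * d $ b)))
     (at s within S)"
    using sum_exp_pos[of "\<theta> + s *\<^sub>R d"]
    by (auto intro!: derivative_eq_intros simp: field_simps)
  then show ?thesis
    by (simp add: log_sum_exp_def softmax_mean_def softmax_def sum_divide_distrib mult.commute)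
qed

lemma has_field_derivative_softmax_line [derivative_intros]:
  "((\<lambda>s. softmax (\<theta> + s *\<^sub>R d) $ a) has_field_derivative
      softmax (\<theta> + s *\<^sub>R d) $ a * (d $ a - softmax_mean (\<theta> + s *\<^sub>R d) (($) d))) (at s within S)"
proof -
  have "softmax (\<theta> + s *\<^sub>R d) $ a = exp ((\<theta> + s *\<^sub>R d) $ a - log_sum_exp (\<theta> + s *\<^sub>R d))" for s
    by (metis ln_softmax exp_ln softmax_pos)
  then show ?thesis
    by (simp only:) (auto intro!: derivative_eq_intros simp: algebra_simps)
qed

lemma softmax_mean_centered:
  "(\<Sum>a\<in>UNIV. softmax \<theta> $ a * (f a - c) * h a) = softmax_mean \<theta> (\<lambda>a. f a * h a) - c * softmax_mean \<theta> h"
  by (simp add: softmax_mean_def algebra_simps sum_subtractf sum_distrib_left)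

lemma has_field_derivative_softmax_mean_line [derivative_intros]:
  "((\<lambda>s. softmax_mean (\<theta> + s *\<^sub>R d) f) has_field_derivative softmax_cov (\<theta> + s *\<^sub>R d) f (($) d))
     (at s within S)"
proof -
  let ?p = "\<lambda>a. softmax (\<theta> + s *\<^sub>R d) $ a" and ?m = "softmax_mean (\<theta> + s *\<^sub>R d) (($) d)"
  have "((\<lambda>s. softmax_mean (\<theta> + s *\<^sub>R d) f) has_field_derivative
      (\<Sum>a\<in>UNIV. ?p a * (d $ a - ?m) * f a)) (at s within S)"
    unfolding softmax_mean_def[of _ f]
    by (auto intro!: derivative_eq_intros)
  also have "(\<Sum>a\<in>UNIV. ?p a * (d $ a - ?m) * f a)
      = softmax_mean (\<theta> + s *\<^sub>R d) (\<lambda>a. d $ a * f a) - ?m * softmax_mean (\<theta> + s *\<^sub>R d) f"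
    by (rule softmax_mean_centered)
  also have "\<dots> = softmax_cov (\<theta> + s *\<^sub>R d) f (($) d)"
    by (simp add: softmax_cov_def mult.commute)
  finally show ?thesis .
qed

text \<open>reward_grad is (diag pi - pi pi^T) r, the gradient of pi^T r, and barrier_grad is eta times
  the gradient of the log-barrier (1/eta) sum_a log pi(a).\<close>

definition reward_grad :: "real^'n::finite \<Rightarrow> real^'n \<Rightarrow> real^'n" where
  "reward_grad \<theta> r = (\<chi> a. softmax \<theta> $ a * (r $ a - softmax_mean \<theta> (($) r)))"

definition barrier_grad :: "real^'n::finite \<Rightarrow> real^'n" where
  "barrier_grad \<theta> = (\<chi> a. 1 - real CARD('n) * softmax \<theta> $ a)"

definition Phi_grad :: "real \<Rightarrow> real^'n::finite \<Rightarrow> real^'n \<Rightarrow> real^'n" where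
  "Phi_grad \<eta> r \<theta> = reward_grad \<theta> r + (1/\<eta>) *\<^sub>R barrier_grad \<theta>"

lemma sum_reward_grad_mult: "(\<Sum>a\<in>UNIV. reward_grad \<theta> r $ a * h a) = softmax_cov \<theta> (($) r) h"
  by (simp add: reward_grad_def softmax_cov_def softmax_mean_centered)

lemma inner_Phi_grad:
  fixes \<theta> :: "real^'n::finite"
  shows "Phi_grad \<eta> r \<theta> \<bullet> d = softmax_cov \<theta> (($) r) (($) d)
    + (1/\<eta>) * ((\<Sum>a\<in>UNIV. d $ a) - real CARD('n) * softmax_mean \<theta> (($) d))"
proof -
  have "reward_grad \<theta> r \<bullet> d = softmax_cov \<theta> (($) r) (($) d)"
    by (simp add: inner_vec_def sum_reward_grad_mult)
  moreover have "barrier_grad \<theta> \<bullet> d = (\<Sum>a\<in>UNIV. d $ a) - real CARD('n) * softmax_mean \<theta> (($) d)"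
    by (simp add: inner_vec_def barrier_grad_def softmax_mean_def algebra_simps sum_subtractf
        sum_distrib_left)
  ultimately show ?thesis
    by (simp add: Phi_grad_def inner_add_left)
qed

lemma has_field_derivative_Phi_line:
  fixes \<theta> :: "real^'n::finite"
  shows "((\<lambda>s. Phi \<eta> r (\<theta> + s *\<^sub>R d)) has_field_derivative Phi_grad \<eta> r (\<theta> + s *\<^sub>R d) \<bullet> d)
     (at s within S)"
proof -
  have "(\<Sum>a\<in>UNIV. (\<theta> + s *\<^sub>R d) $ a) = (\<Sum>a\<in>UNIV. \<theta> $ a) + s * (\<Sum>a\<in>UNIV. d $ a)" for s
    by (simp add: sum.distrib sum_distrib_left)
  then have "((\<lambda>s. (\<Sum>a\<in>UNIV. (\<theta> + s *\<^sub>R d) $ a) - real CARD('n) * log_sum_exp (\<theta> + s *\<^sub>R d))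
      has_field_derivative (\<Sum>a\<in>UNIV. d $ a) - real CARD('n) * softmax_mean (\<theta> + s *\<^sub>R d) (($) d))
      (at s within S)"
    by (auto intro!: derivative_eq_intros)
  then show ?thesis
    unfolding Phi_eq_log_sum_exp inner_Phi_grad
    by (rule DERIV_add[OF has_field_derivative_softmax_mean_line DERIV_cmult])
qed

lemma Phi_gradient_eq:
  assumes "(Phi \<eta> r has_derivative (\<lambda>h. g \<bullet> h)) (at \<theta>)"
  shows "g = Phi_grad \<eta> r \<theta>"
proof -
  let ?d = "g - Phi_grad \<eta> r \<theta>"
  have "((\<lambda>s. \<theta> + s *\<^sub>R ?d) has_derivative (\<lambda>h. h *\<^sub>R ?d)) (at 0)"
    by (auto intro!: derivative_eq_intros)
  from has_derivative_compose[OF this, of "Phi \<eta> r" "\<lambda>h. g \<bullet> h"] assms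
  have "((\<lambda>s. Phi \<eta> r (\<theta> + s *\<^sub>R ?d)) has_field_derivative g \<bullet> ?d) (at 0)"
    by (simp add: has_field_derivative_def mult.commute[of _ "g \<bullet> ?d"])
  with has_field_derivative_Phi_line[of \<eta> r \<theta> ?d 0 UNIV]
  have "g \<bullet> ?d = Phi_grad \<eta> r \<theta> \<bullet> ?d"
    using DERIV_unique by fastforce
  then have "?d \<bullet> ?d = 0"
    by (simp add: inner_diff_left)
  then show ?thesis by simp
qed

text \<open>The first two terms together are E_pi[(r - E_pi r)(d - E_pi d)^2].\<close>

definition Phi_hessian_form :: "real \<Rightarrow> real^'n::finite \<Rightarrow> real^'n \<Rightarrow> real^'n \<Rightarrow> real" where
  "Phi_hessian_form \<eta> r \<theta> d =
     softmax_cov \<theta> (($) r) (\<lambda>a. (d $ a)\<^sup>2)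
     - 2 * softmax_mean \<theta> (($) d) * softmax_cov \<theta> (($) r) (($) d)
     - real CARD('n) / \<eta> * softmax_cov \<theta> (($) d) (($) d)"

lemma has_field_derivative_Phi_grad_line:
  "((\<lambda>s. Phi_grad \<eta> r (\<theta> + s *\<^sub>R d) \<bullet> d) has_field_derivative Phi_hessian_form \<eta> r (\<theta> + s *\<^sub>R d) d)
     (at s within S)"
  unfolding inner_Phi_grad softmax_cov_def[of _ "($) r" "($) d"]
  by (rule derivative_eq_intros refl | simp)+
     (simp add: Phi_hessian_form_def softmax_cov_def power2_eq_square algebra_simps diff_divide_distrib)

lemma norm_vec_power2: "(norm x)\<^sup>2 = (\<Sum>a\<in>UNIV. (x $ a)\<^sup>2)" for x :: "real^'n::finite"
  unfolding power2_norm_eq_inner by (simp add: inner_vec_def power2_eq_square)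

lemma abs_softmax_mean_le:
  assumes "\<And>a. \<bar>f a\<bar> \<le> B"
  shows "\<bar>softmax_mean \<theta> f\<bar> \<le> B"
proof -
  have "\<bar>softmax_mean \<theta> f\<bar> \<le> (\<Sum>a\<in>UNIV. softmax \<theta> $ a * \<bar>f a\<bar>)"
    unfolding softmax_mean_def
    using sum_abs[of "\<lambda>a. softmax \<theta> $ a * f a"] by (simp add: abs_mult abs_of_pos softmax_pos)
  also have "\<dots> \<le> (\<Sum>a\<in>UNIV. softmax \<theta> $ a * B)"
    by (intro sum_mono mult_left_mono assms) (simp add: less_imp_le softmax_pos)
  also have "\<dots> = B"
    by (simp add: sum_softmax flip: sum_distrib_right)
  finally show ?thesis .
qed

lemma abs_softmax_mean_le_norm: "\<bar>softmax_mean \<theta> (($) d)\<bar> \<le> norm d"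
  by (rule abs_softmax_mean_le) (rule component_le_norm_cart)

lemma abs_softmax_var_le: "\<bar>softmax_cov \<theta> (($) d) (($) d)\<bar> \<le> (norm d)\<^sup>2"
proof -
  have "\<bar>d $ a * d $ a\<bar> \<le> (norm d)\<^sup>2" for a
    using component_le_norm_cart[of d a] abs_le_square_iff[of "d $ a" "norm d"]
    by (simp add: power2_eq_square)
  then have "\<bar>softmax_mean \<theta> (\<lambda>a. d $ a * d $ a)\<bar> \<le> (norm d)\<^sup>2"
    by (rule abs_softmax_mean_le)
  moreover have "0 \<le> softmax_mean \<theta> (\<lambda>a. d $ a * d $ a)"
    unfolding softmax_mean_def by (auto intro!: sum_nonneg simp: less_imp_le softmax_pos)
  moreover have "(softmax_mean \<theta> (($) d))\<^sup>2 \<le> (norm d)\<^sup>2"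
    using abs_softmax_mean_le_norm[of \<theta> d] by (metis abs_ge_zero power2_abs power_mono)
  ultimately show ?thesis
    using zero_le_square[of "softmax_mean \<theta> (($) d)"]
    unfolding softmax_cov_def abs_le_iff power2_eq_square by linarith
qed

lemma abs_sum_mult_power2_le: "\<bar>\<Sum>a\<in>UNIV. v $ a * (d $ a)\<^sup>2\<bar> \<le> norm v * (norm d)\<^sup>2"
  for v d :: "real^'n::finite"
proof -
  have "\<bar>\<Sum>a\<in>UNIV. v $ a * (d $ a)\<^sup>2\<bar> \<le> (\<Sum>a\<in>UNIV. norm v * (d $ a)\<^sup>2)"
  proof (rule order_trans[OF sum_abs sum_mono])
    show "\<bar>v $ a * (d $ a)\<^sup>2\<bar> \<le> norm v * (d $ a)\<^sup>2" for a
      using component_le_norm_cart[of v a] by (simp add: abs_mult mult_right_mono)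
  qed
  then show ?thesis by (simp add: norm_vec_power2 sum_distrib_left)
qed

lemma abs_Phi_hessian_form_le:
  fixes \<theta> :: "real^'n::finite"
  assumes "\<eta> > 0"
  shows "\<bar>Phi_hessian_form \<eta> r \<theta> d\<bar> \<le> (3 * norm (reward_grad \<theta> r) + real CARD('n) / \<eta>) * (norm d)\<^sup>2"
proof -
  let ?v = "reward_grad \<theta> r" and ?m = "softmax_mean \<theta> (($) d)"
  have cov_sq: "\<bar>softmax_cov \<theta> (($) r) (\<lambda>a. (d $ a)\<^sup>2)\<bar> \<le> norm ?v * (norm d)\<^sup>2"
    using abs_sum_mult_power2_le[of ?v d] by (simp add: sum_reward_grad_mult)
  have "\<bar>softmax_cov \<theta> (($) r) (($) d)\<bar> \<le> norm ?v * norm d"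
    using Cauchy_Schwarz_ineq2[of ?v d] by (simp add: inner_vec_def sum_reward_grad_mult)
  then have "\<bar>2 * ?m * softmax_cov \<theta> (($) r) (($) d)\<bar> \<le> 2 * (norm d * (norm ?v * norm d))"
    using abs_softmax_mean_le_norm[of \<theta> d] by (simp add: abs_mult mult_mono)
  moreover have "\<bar>real CARD('n) / \<eta> * softmax_cov \<theta> (($) d) (($) d)\<bar> \<le> real CARD('n) / \<eta> * (norm d)\<^sup>2"
    using abs_softmax_var_le[of \<theta> d] assms
    by (auto simp: abs_mult intro!: divide_right_mono mult_left_mono)
  ultimately have "\<bar>Phi_hessian_form \<eta> r \<theta> d\<bar>
      \<le> norm ?v * (norm d)\<^sup>2 + 2 * (norm d * (norm ?v * norm d)) + real CARD('n) / \<eta> * (norm d)\<^sup>2"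
    using cov_sq unfolding Phi_hessian_form_def by linarith
  then show ?thesis
    by (simp add: power2_eq_square algebra_simps)
qed

lemma has_field_derivative_reward_grad_line [derivative_intros]:
  "((\<lambda>s. reward_grad (\<theta> + s *\<^sub>R d) r $ a) has_field_derivative
      reward_grad (\<theta> + s *\<^sub>R d) r $ a * (d $ a - softmax_mean (\<theta> + s *\<^sub>R d) (($) d))
      - softmax (\<theta> + s *\<^sub>R d) $ a * softmax_cov (\<theta> + s *\<^sub>R d) (($) r) (($) d)) (at s within S)"
  unfolding reward_grad_def vec_lambda_beta
  by (auto intro!: derivative_eq_intros simp: algebra_simps)

lemma norm_reward_grad_line_power2_deriv_le:
  "\<exists>D. ((\<lambda>s. (norm (reward_grad (\<theta> + s *\<^sub>R d) r))\<^sup>2) has_real_derivative D) (at s)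
     \<and> D \<le> 6 * norm d * (norm (reward_grad (\<theta> + s *\<^sub>R d) r))\<^sup>2"
proof -
  let ?v = "reward_grad (\<theta> + s *\<^sub>R d) r" and ?p = "softmax (\<theta> + s *\<^sub>R d)"
    and ?m = "softmax_mean (\<theta> + s *\<^sub>R d) (($) d)"
    and ?c = "softmax_cov (\<theta> + s *\<^sub>R d) (($) r) (($) d)"
  define D where "D = 2 * (\<Sum>a\<in>UNIV. (?v $ a)\<^sup>2 * (d $ a - ?m)) - 2 * ?c * (\<Sum>a\<in>UNIV. ?v $ a * ?p $ a)"
  have "((\<lambda>s. (norm (reward_grad (\<theta> + s *\<^sub>R d) r))\<^sup>2) has_real_derivative D) (at s)"
    unfolding norm_vec_power2
    by (auto intro!: derivative_eq_intros
        simp: D_def power2_eq_square algebra_simps sum_subtractf sum_distrib_left sum.distrib)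
  moreover have "(\<Sum>a\<in>UNIV. (?v $ a)\<^sup>2 * (d $ a - ?m)) \<le> 2 * norm d * (norm ?v)\<^sup>2"
  proof -
    have "d $ a - ?m \<le> 2 * norm d" for a
      using component_le_norm_cart[of d a] abs_softmax_mean_le_norm[of "\<theta> + s *\<^sub>R d" d]
      by (simp add: abs_le_iff)
    then have "(\<Sum>a\<in>UNIV. (?v $ a)\<^sup>2 * (d $ a - ?m)) \<le> (\<Sum>a\<in>UNIV. (?v $ a)\<^sup>2 * (2 * norm d))"
      by (intro sum_mono mult_left_mono) auto
    then show ?thesis
      by (simp add: norm_vec_power2 sum_distrib_left mult.commute)
  qed
  moreover have "\<bar>?c * (\<Sum>a\<in>UNIV. ?v $ a * ?p $ a)\<bar> \<le> norm d * (norm ?v)\<^sup>2"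
  proof -
    have "\<bar>?c\<bar> \<le> norm ?v * norm d"
      using Cauchy_Schwarz_ineq2[of ?v d] by (simp add: inner_vec_def sum_reward_grad_mult)
    moreover have "\<bar>\<Sum>a\<in>UNIV. ?v $ a * ?p $ a\<bar> \<le> norm ?v"
      using abs_softmax_mean_le_norm[of "\<theta> + s *\<^sub>R d" ?v]
      by (simp add: softmax_mean_def mult.commute)
    ultimately have "\<bar>?c\<bar> * \<bar>\<Sum>a\<in>UNIV. ?v $ a * ?p $ a\<bar> \<le> norm ?v * norm d * norm ?v"
      by (intro mult_mono) auto
    then show ?thesis
      by (simp add: abs_mult power2_eq_square mult_ac)
  qed
  ultimately show ?thesis
    by (intro exI[of _ D]) (auto simp: D_def)
qed

lemma gronwall_exp_bound:
  fixes f :: "real \<Rightarrow> real"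
  assumes deriv: "\<And>s. 0 \<le> s \<Longrightarrow> s \<le> t \<Longrightarrow> \<exists>D. (f has_real_derivative D) (at s) \<and> D \<le> c * f s"
    and "0 \<le> t"
  shows "f t \<le> f 0 * exp (c * t)"
proof -
  define g where "g s = f s * exp (- (c * s))" for s
  have "g t \<le> g 0"
  proof (rule DERIV_nonpos_imp_nonincreasing[OF \<open>0 \<le> t\<close>])
    fix s assume "0 \<le> s" "s \<le> t"
    then obtain D where D: "(f has_real_derivative D) (at s)" "D \<le> c * f s"
      using deriv by blast
    have "(g has_real_derivative (D - c * f s) * exp (- (c * s))) (at s)"
      unfolding g_def by (auto intro!: derivative_eq_intros D(1) simp: algebra_simps)
    moreover have "(D - c * f s) * exp (- (c * s)) \<le> 0"
      using D(2) by (simp add: mult_nonpos_nonneg)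
    ultimately show "\<exists>y. (g has_real_derivative y) (at s) \<and> y \<le> 0" by blast
  qed
  then show ?thesis
    by (simp add: g_def exp_minus field_simps)
qed

lemma exp_le_one_div_one_minus:
  fixes x :: real
  assumes "x < 1"
  shows "exp x \<le> 1 / (1 - x)"
proof -
  have "(1 - x) * exp x \<le> exp (- x) * exp x"
    using exp_ge_add_one_self[of "- x"] by (intro mult_right_mono) auto
  then show ?thesis
    using assms by (simp add: field_simps flip: exp_add)
qed

lemma norm_reward_grad_line_le:
  assumes "0 \<le> t" "t \<le> 1" "3 * norm d < 1"
  shows "norm (reward_grad (\<theta> + t *\<^sub>R d) r) \<le> norm (reward_grad \<theta> r) / (1 - 3 * norm d)"
proof -
  let ?v = "\<lambda>s. reward_grad (\<theta> + s *\<^sub>R d) r"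
  have "(norm (?v t))\<^sup>2 \<le> (norm (?v 0))\<^sup>2 * exp (6 * norm d * t)"
    using norm_reward_grad_line_power2_deriv_le \<open>0 \<le> t\<close> by (rule gronwall_exp_bound)
  also have "\<dots> = (norm (?v 0) * exp (3 * norm d * t))\<^sup>2"
    by (simp add: power_mult_distrib power2_eq_square flip: exp_add)
  finally have "norm (?v t) \<le> norm (?v 0) * exp (3 * norm d * t)"
    by (rule power2_le_imp_le) simp
  also have "\<dots> \<le> norm (?v 0) * exp (3 * norm d)"
    using assms by (intro mult_left_mono) (auto simp: mult_left_le)
  also have "\<dots> \<le> norm (?v 0) * (1 / (1 - 3 * norm d))"
    using assms by (intro mult_left_mono exp_le_one_div_one_minus) auto
  finally show ?thesis by simp
qed

lemma Maclaurin_second_order: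
  fixes f f' f'' :: "real \<Rightarrow> real"
  assumes "\<And>s. (f has_real_derivative f' s) (at s)" "\<And>s. (f' has_real_derivative f'' s) (at s)"
  obtains t where "0 < t" "t < 1" "f 1 = f 0 + f' 0 + f'' t / 2"
proof -
  define diff where "diff m = (if m = 0 then f else if m = 1 then f' else f'')" for m :: nat
  have "\<exists>t. 0 < t \<and> t < 1 \<and> f 1 = (\<Sum>m<2. diff m 0 / fact m * 1 ^ m) + diff 2 t / fact 2 * 1 ^ 2"
  proof (rule Maclaurin)
    show "\<forall>m t. m < 2 \<and> 0 \<le> t \<and> t \<le> 1 \<longrightarrow> DERIV (diff m) t :> diff (Suc m) t"
      using assms by (auto simp: diff_def less_2_cases_iff)
  qed (auto simp: diff_def)
  then show ?thesis
    using that by (auto simp: diff_def numeral_2_eq_2 lessThan_Suc)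
qed

lemma Phi_remainder_le:
  fixes \<theta> d :: "real^'n::finite"
  assumes "\<eta> > 0" "3 * norm d < 1"
  shows "\<bar>Phi \<eta> r (\<theta> + d) - Phi \<eta> r \<theta> - Phi_grad \<eta> r \<theta> \<bullet> d\<bar>
    \<le> (3 * norm (reward_grad \<theta> r) / (1 - 3 * norm d) + real CARD('n) / \<eta>) / 2 * (norm d)\<^sup>2"
proof -
  obtain t where t: "0 < t" "t < 1"
    and taylor: "Phi \<eta> r (\<theta> + d) = Phi \<eta> r \<theta> + Phi_grad \<eta> r \<theta> \<bullet> d
                   + Phi_hessian_form \<eta> r (\<theta> + t *\<^sub>R d) d / 2"
  proof (rule Maclaurin_second_order[of "\<lambda>s. Phi \<eta> r (\<theta> + s *\<^sub>R d)" "\<lambda>s. Phi_grad \<eta> r (\<theta> + s *\<^sub>R d) \<bullet> d"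
        "\<lambda>s. Phi_hessian_form \<eta> r (\<theta> + s *\<^sub>R d) d"])
    show "((\<lambda>s. Phi \<eta> r (\<theta> + s *\<^sub>R d)) has_real_derivative Phi_grad \<eta> r (\<theta> + s *\<^sub>R d) \<bullet> d) (at s)"
      for s by (rule has_field_derivative_Phi_line)
    show "((\<lambda>s. Phi_grad \<eta> r (\<theta> + s *\<^sub>R d) \<bullet> d) has_real_derivative
        Phi_hessian_form \<eta> r (\<theta> + s *\<^sub>R d) d) (at s)"
      for s by (rule has_field_derivative_Phi_grad_line)
  qed (use that in simp)
  have "\<bar>Phi_hessian_form \<eta> r (\<theta> + t *\<^sub>R d) d\<bar>
      \<le> (3 * norm (reward_grad (\<theta> + t *\<^sub>R d) r) + real CARD('n) / \<eta>) * (norm d)\<^sup>2"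
    using \<open>\<eta> > 0\<close> by (rule abs_Phi_hessian_form_le)
  also have "\<dots> \<le> (3 * norm (reward_grad \<theta> r) / (1 - 3 * norm d) + real CARD('n) / \<eta>) * (norm d)\<^sup>2"
    using norm_reward_grad_line_le[of t d \<theta> r] t assms by (intro mult_right_mono add_right_mono) auto
  finally show ?thesis
    using taylor by simp
qed

lemma norm_barrier_grad_le: "norm (barrier_grad \<theta>) \<le> real CARD('n)"
  for \<theta> :: "real^'n::finite"
proof (rule power2_le_imp_le)
  let ?K = "real CARD('n)" and ?p = "\<lambda>a. softmax \<theta> $ a"
  have "(norm (barrier_grad \<theta>))\<^sup>2 = (\<Sum>a\<in>UNIV. 1 - 2 * ?K * ?p a + ?K\<^sup>2 * (?p a)\<^sup>2)"
    unfolding norm_vec_power2 barrier_grad_def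
    by (intro sum.cong refl) (simp add: power2_eq_square algebra_simps)
  also have "\<dots> = ?K - 2 * ?K * (\<Sum>a\<in>UNIV. ?p a) + ?K\<^sup>2 * (\<Sum>a\<in>UNIV. (?p a)\<^sup>2)"
    by (simp add: sum.distrib sum_subtractf sum_distrib_left)
  also have "\<dots> \<le> ?K - 2 * ?K * 1 + ?K\<^sup>2 * 1"
    unfolding sum_softmax by (intro add_left_mono mult_left_mono sum_softmax_power2_le) simp
  also have "\<dots> \<le> ?K\<^sup>2"
    by simp
  finally show "(norm (barrier_grad \<theta>))\<^sup>2 \<le> ?K\<^sup>2" .
qed simp

lemma norm_reward_grad_le:
  fixes \<theta> :: "real^'n::finite"
  assumes "\<eta> > 0"
  shows "norm (reward_grad \<theta> r) \<le> norm (Phi_grad \<eta> r \<theta>) + real CARD('n) / \<eta>"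
proof -
  have "norm (reward_grad \<theta> r) \<le> norm (Phi_grad \<eta> r \<theta>) + norm ((1/\<eta>) *\<^sub>R barrier_grad \<theta>)"
    using norm_triangle_ineq4[of "Phi_grad \<eta> r \<theta>" "(1/\<eta>) *\<^sub>R barrier_grad \<theta>"]
    by (simp add: Phi_grad_def)
  also have "norm ((1/\<eta>) *\<^sub>R barrier_grad \<theta>) \<le> real CARD('n) / \<eta>"
    using norm_barrier_grad_le[of \<theta>] assms by (simp add: divide_right_mono)
  finally show ?thesis by simp
qed

lemma Phi_remainder_le_norm_grad:
  fixes \<theta> d :: "real^'n::finite"
  assumes "\<eta> > 0" and grad: "(Phi \<eta> r has_derivative (\<lambda>h. g \<bullet> h)) (at \<theta>)"
    and "1/2 < q" "q \<le> 1 - 3 * norm d"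
  shows "\<bar>Phi \<eta> r (\<theta> + d) - Phi \<eta> r \<theta> - g \<bullet> d\<bar>
    \<le> (3 * norm g / (2 * q) + 4 * real CARD('n) / \<eta>) * (norm d)\<^sup>2"
proof -
  let ?k = "real CARD('n) / \<eta>"
  have "?k \<ge> 0" "?k / q \<le> 2 * ?k"
    using assms by (auto simp: divide_simps)
  have "\<bar>Phi \<eta> r (\<theta> + d) - Phi \<eta> r \<theta> - g \<bullet> d\<bar>
      \<le> (3 * norm (reward_grad \<theta> r) / (1 - 3 * norm d) + ?k) / 2 * (norm d)\<^sup>2"
    using assms unfolding Phi_gradient_eq[OF grad] by (intro Phi_remainder_le) auto
  also have "\<dots> \<le> (3 * (norm g + ?k) / q + ?k) / 2 * (norm d)\<^sup>2"
    using norm_reward_grad_le[OF \<open>\<eta> > 0\<close>, of \<theta> r] assms \<open>?k \<ge> 0\<close>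
    unfolding Phi_gradient_eq[OF grad]
    by (intro mult_right_mono divide_right_mono add_right_mono frac_le) auto
  also have "\<dots> \<le> (3 * norm g / (2 * q) + 4 * ?k) * (norm d)\<^sup>2"
  proof (rule mult_right_mono)
    have "(3 * (norm g + ?k) / q + ?k) / 2 = 3 * norm g / (2 * q) + 3/2 * (?k / q) + ?k / 2"
      using assms by (simp add: field_simps)
    then show "(3 * (norm g + ?k) / q + ?k) / 2 \<le> 3 * norm g / (2 * q) + 4 * ?k"
      using \<open>?k / q \<le> 2 * ?k\<close> \<open>?k \<ge> 0\<close> by simp
  qed simp
  finally show ?thesis
    by simp
qed

lemma norm_axis_minus_softmax_le: "norm (axis i 1 - softmax \<theta>) \<le> sqrt 2"
proof (rule real_le_rsqrt)
  have "((if a = i then 1 else 0) - softmax \<theta> $ a)\<^sup>2 \<le> (if a = i then 1 else 0) + softmax \<theta> $ a" for a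
    using softmax_pos[of \<theta> a] softmax_le_1[of \<theta> a]
    by (auto simp: power2_eq_square algebra_simps mult_left_le)
  then have "(\<Sum>a\<in>UNIV. ((if a = i then 1 else 0) - softmax \<theta> $ a)\<^sup>2)
      \<le> (\<Sum>a\<in>UNIV. (if a = i then 1 else 0) + softmax \<theta> $ a)"
    by (rule sum_mono)
  then show "(norm (axis i 1 - softmax \<theta>))\<^sup>2 \<le> 2"
    by (simp add: norm_vec_power2 axis_def sum.distrib sum_softmax)
qed

lemma lbsgb_step_diff:
  "lbsgb_step \<alpha> \<eta> \<theta> act R - \<theta> = \<alpha> *\<^sub>R (R *\<^sub>R (axis act 1 - softmax \<theta>) + (1/\<eta>) *\<^sub>R barrier_grad \<theta>)"
proof -
  have weighted: "softmax \<theta> $ a * rhat \<theta> act R $ a = (if act = a then R else 0)" for a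
    using softmax_pos[of \<theta> a] by (simp add: rhat_def)
  then have "softmax \<theta> \<bullet> rhat \<theta> act R = R"
    by (simp add: inner_vec_def)
  then show ?thesis
    by (simp add: lbsgb_step_def Let_def weighted barrier_grad_def axis_def vec_eq_iff algebra_simps)
qed

lemma norm_lbsgb_step_diff_le:
  fixes \<theta> :: "real^'n::finite"
  assumes "\<alpha> \<ge> 0" "\<eta> > 0"
  shows "norm (lbsgb_step \<alpha> \<eta> \<theta> act R - \<theta>) \<le> \<alpha> * (sqrt 2 * \<bar>R\<bar> + real CARD('n) / \<eta>)"
proof -
  have "norm (R *\<^sub>R (axis act 1 - softmax \<theta>) + (1/\<eta>) *\<^sub>R barrier_grad \<theta>)
      \<le> \<bar>R\<bar> * norm (axis act 1 - softmax \<theta>) + (1/\<eta>) * norm (barrier_grad \<theta>)"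
    using norm_triangle_ineq[of "R *\<^sub>R (axis act 1 - softmax \<theta>)" "(1/\<eta>) *\<^sub>R barrier_grad \<theta>"] assms
    by simp
  also have "\<dots> \<le> \<bar>R\<bar> * sqrt 2 + (1/\<eta>) * real CARD('n)"
    using norm_axis_minus_softmax_le norm_barrier_grad_le assms
    by (intro add_mono mult_left_mono) auto
  finally show ?thesis
    using assms by (simp add: lbsgb_step_diff mult_left_mono mult.commute)
qed

lemma norm_lbsgb_Suc_diff_le:
  fixes acts :: "nat \<Rightarrow> 'n::finite"
  assumes "\<alpha> \<ge> 0" "\<eta> > 0" "\<bar>rews n\<bar> \<le> Rmax"
  shows "norm (lbsgb \<alpha> \<eta> acts rews (Suc n) - lbsgb \<alpha> \<eta> acts rews n)
    \<le> \<alpha> * (sqrt 2 * Rmax + real CARD('n) / \<eta>)"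
proof -
  have "norm (lbsgb \<alpha> \<eta> acts rews (Suc n) - lbsgb \<alpha> \<eta> acts rews n)
      \<le> \<alpha> * (sqrt 2 * \<bar>rews n\<bar> + real CARD('n) / \<eta>)"
    using norm_lbsgb_step_diff_le[OF assms(1,2)] by simp
  also have "\<dots> \<le> \<alpha> * (sqrt 2 * Rmax + real CARD('n) / \<eta>)"
    using assms by (intro mult_left_mono add_right_mono) auto
  finally show ?thesis .
qed

theorem lemmaC2:
  fixes r :: "real^'n::finite" and Rmax \<eta> \<alpha> :: real
    and acts :: "nat \<Rightarrow> 'n" and rews :: "nat \<Rightarrow> real" and n :: nat and g :: "real^'n"
  defines "K \<equiv> real CARD('n)"
  assumes eta: "\<eta> > 0"
    and rews_bd: "\<And>t. \<bar>rews t\<bar> \<le> Rmax"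
    and r_bd: "\<And>a. \<bar>r $ a\<bar> \<le> Rmax"
    and alpha_pos: "\<alpha> > 0"
    and alpha_lt: "\<alpha> < 1 / (6 * (sqrt 2 * Rmax + (2/\<eta>) * K))"
    and grad: "(Phi \<eta> r has_derivative (\<lambda>h. g \<bullet> h)) (at (lbsgb \<alpha> \<eta> acts rews n))"
  shows "\<bar>Phi \<eta> r (lbsgb \<alpha> \<eta> acts rews (Suc n)) - Phi \<eta> r (lbsgb \<alpha> \<eta> acts rews n)
            - g \<bullet> (lbsgb \<alpha> \<eta> acts rews (Suc n) - lbsgb \<alpha> \<eta> acts rews n)\<bar>
         \<le> (3 * norm g / (2 - 6 * \<alpha> * (sqrt 2 * Rmax + (2/\<eta>) * K)) + 15 * K / \<eta>)
            * (norm (lbsgb \<alpha> \<eta> acts rews (Suc n) - lbsgb \<alpha> \<eta> acts rews n))^2"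
proof -
  let ?\<theta> = "lbsgb \<alpha> \<eta> acts rews n" and ?d = "lbsgb \<alpha> \<eta> acts rews (Suc n) - lbsgb \<alpha> \<eta> acts rews n"
  define c where "c = sqrt 2 * Rmax + (2/\<eta>) * K"
  have "K \<ge> 1" "Rmax \<ge> 0"
    using rews_bd[of 0] by (auto simp: K_def)
  then have "c > 0"
    using eta by (simp add: c_def add_nonneg_pos)
  then have "\<alpha> * c < 1/6"
    using alpha_lt unfolding c_def[symmetric] by (simp add: field_simps)
  have "norm ?d \<le> \<alpha> * (sqrt 2 * Rmax + K / \<eta>)"
    unfolding K_def using alpha_pos eta rews_bd by (intro norm_lbsgb_Suc_diff_le) auto
  also have "\<dots> \<le> \<alpha> * c"
    using alpha_pos eta \<open>K \<ge> 1\<close> by (intro mult_left_mono) (auto simp: c_def divide_simps)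
  finally have "1 - 3 * (\<alpha> * c) \<le> 1 - 3 * norm ?d"
    by linarith
  then have "\<bar>Phi \<eta> r (?\<theta> + ?d) - Phi \<eta> r ?\<theta> - g \<bullet> ?d\<bar>
      \<le> (3 * norm g / (2 * (1 - 3 * (\<alpha> * c))) + 4 * K / \<eta>) * (norm ?d)\<^sup>2"
    unfolding K_def using \<open>\<alpha> * c < 1/6\<close> by (intro Phi_remainder_le_norm_grad[OF eta grad]) auto
  also have "\<dots> \<le> (3 * norm g / (2 - 6 * \<alpha> * c) + 15 * K / \<eta>) * (norm ?d)\<^sup>2"
    using \<open>K \<ge> 1\<close> eta by (intro mult_right_mono add_mono) (auto simp: divide_right_mono algebra_simps)
  finally show ?thesis
    by (simp add: c_def)
qed

end
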